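(* Let $\Phi$ be a homogeneous $\Sigma\Pi\Sigma$ circuit over a set of variables $X$ and a field $\mathbb{F}$, with top fan-in $k$, computing a homogeneous polynomial $f$ of degree $d$. Then for any partition $A:X\to Y\cup Z$, $\mathrm{maxrank}(M_{\Phi^A})\le k\cdot 2^d$.
   Context: A $\Sigma\Pi\Sigma$ circuit computes $\sum_{i=1}^k\prod_{j=1}^{\deg(P_i)}l_{i,j}$ (a top plus gate of fan-in $k$ over product gates $P_i$ whose inputs are outputs $l_{i,j}$ of bottom plus gates); it is homogeneous if every $l_{i,j}$ is a homogeneous linear form. $Y,Z$ are disjoint sets of variables and a partition is a map $A:X\to Y\cup Z$; $\Phi^A$ is the circuit obtained by replacing every variable $x$ by $A(x)$, and $M_{\Phi^A}$ is the polynomial coefficient matrix of the polynomial it computes (namely $f^A$). For $g\in\mathbb{F}[Y,Z]$, $M_g$ has rows indexed by monic multilinear monomials $p$ in $Y$ and columns by monic multilinear monomials $q$ in $Z$, with $M_g(p,q)=G$ iff $g=pq\,G+Q$ uniquely with $G$ containing only variables present in $p,q$ and $Q$ having no monomial divisible by $pq$ that contains only variables present in $p,q$. $\mathrm{maxrank}(M_g)=\max_{S:Y\cup Z\to\mathbb{F}}\mathrm{rank}(M_g|_S)$, where $M_g|_S$ evaluates entries at $S$. *)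

theory Defs
  imports Complex_Main "HOL-Library.Poly_Mapping" "HOL-Library.Function_Algebras"
begin

type_synonym ('v,'a) mpoly = "('v \<Rightarrow>\<^sub>0 nat) \<Rightarrow>\<^sub>0 'a"

definition mon_deg :: "('v \<Rightarrow>\<^sub>0 nat) \<Rightarrow> nat" where
  "mon_deg m = (\<Sum>v\<in>Poly_Mapping.keys m. Poly_Mapping.lookup m v)"

definition vars :: "('v,'a::zero) mpoly \<Rightarrow> 'v set" where
  "vars g = (\<Union>m\<in>Poly_Mapping.keys g. Poly_Mapping.keys m)"

definition homogeneous :: "nat \<Rightarrow> ('v,'a::zero) mpoly \<Rightarrow> bool" where
  "homogeneous d g \<longleftrightarrow> (\<forall>m\<in>Poly_Mapping.keys g. mon_deg m = d)"

definition hom_linear_form :: "'x set \<Rightarrow> ('x,'a::zero) mpoly \<Rightarrow> bool" where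
  "hom_linear_form X l \<longleftrightarrow> homogeneous 1 l \<and> vars l \<subseteq> X"

text \<open>A Sigma-Pi-Sigma circuit: a list (top plus gate, fan-in = length) of product gates,
  each a list of bottom linear forms. Its computed polynomial:\<close>
definition circuit_poly :: "('x,'a::comm_ring_1) mpoly list list \<Rightarrow> ('x,'a) mpoly" where
  "circuit_poly \<Phi> = sum_list (map prod_list \<Phi>)"

definition homogeneous_SPS :: "'x set \<Rightarrow> ('x,'a::comm_ring_1) mpoly list list \<Rightarrow> bool" where
  "homogeneous_SPS X \<Phi> \<longleftrightarrow> (\<forall>P\<in>set \<Phi>. \<forall>l\<in>set P. hom_linear_form X l)"

definition rename_mon :: "('x \<Rightarrow> 'v) \<Rightarrow> ('x \<Rightarrow>\<^sub>0 nat) \<Rightarrow> ('v \<Rightarrow>\<^sub>0 nat)" where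
  "rename_mon A m = (\<Sum>x\<in>Poly_Mapping.keys m. Poly_Mapping.single (A x) (Poly_Mapping.lookup m x))"

definition rename_poly :: "('x \<Rightarrow> 'v) \<Rightarrow> ('x,'a::comm_monoid_add) mpoly \<Rightarrow> ('v,'a) mpoly" where
  "rename_poly A p = (\<Sum>m\<in>Poly_Mapping.keys p. Poly_Mapping.single (rename_mon A m) (Poly_Mapping.lookup p m))"

definition circuit_subst :: "('x \<Rightarrow> 'v) \<Rightarrow> ('x,'a::comm_ring_1) mpoly list list \<Rightarrow> ('v,'a) mpoly list list" where
  "circuit_subst A \<Phi> = map (map (rename_poly A)) \<Phi>"

definition ml_mon :: "'v set \<Rightarrow> ('v \<Rightarrow>\<^sub>0 nat)" where
  "ml_mon P = (\<Sum>v\<in>P. Poly_Mapping.single v 1)"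

definition mon_divides :: "('v \<Rightarrow>\<^sub>0 nat) \<Rightarrow> ('v \<Rightarrow>\<^sub>0 nat) \<Rightarrow> bool" where
  "mon_divides a b \<longleftrightarrow> (\<forall>v. Poly_Mapping.lookup a v \<le> Poly_Mapping.lookup b v)"

text \<open>Entry M_g(p,q) with p = ml_mon P, q = ml_mon Q: the unique G with
  g = p q G + R, vars G \<subseteq> P \<union> Q, and no monomial of R both divisible by p q and
  containing only variables of P \<union> Q.\<close>
definition coeff_entry :: "('v,'a::comm_ring_1) mpoly \<Rightarrow> 'v set \<Rightarrow> 'v set \<Rightarrow> ('v,'a) mpoly" where
  "coeff_entry g P Q = (THE G. vars G \<subseteq> P \<union> Q \<and>
     (\<exists>R. g = Poly_Mapping.single (ml_mon P + ml_mon Q) 1 * G + R \<and>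
        (\<forall>m\<in>Poly_Mapping.keys R. \<not> (mon_divides (ml_mon P + ml_mon Q) m \<and> Poly_Mapping.keys m \<subseteq> P \<union> Q))))"

definition eval_poly :: "('v \<Rightarrow> 'a::comm_ring_1) \<Rightarrow> ('v,'a) mpoly \<Rightarrow> 'a" where
  "eval_poly S G = (\<Sum>m\<in>Poly_Mapping.keys G. Poly_Mapping.lookup G m * (\<Prod>v\<in>Poly_Mapping.keys m. S v ^ Poly_Mapping.lookup m v))"

text \<open>Rows of M_g|_S, indexed by finite subsets P \<subseteq> Y (monic multilinear monomials in Y);
  each row is the function on column indices (finite Q \<subseteq> Z), zero elsewhere.\<close>
definition eval_row :: "'v set \<Rightarrow> ('v,'a::comm_ring_1) mpoly \<Rightarrow> ('v \<Rightarrow> 'a) \<Rightarrow> 'v set \<Rightarrow> ('v set \<Rightarrow> 'a)" where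
  "eval_row Z g S P = (\<lambda>Q. if finite Q \<and> Q \<subseteq> Z then eval_poly S (coeff_entry g P Q) else 0)"

definition rank_eval :: "'v set \<Rightarrow> 'v set \<Rightarrow> ('v,'a::field) mpoly \<Rightarrow> ('v \<Rightarrow> 'a) \<Rightarrow> nat" where
  "rank_eval Y Z g S = vector_space.dim (\<lambda>c f x. c * f x)
      (eval_row Z g S ` {P. finite P \<and> P \<subseteq> Y})"

definition maxrank :: "'v set \<Rightarrow> 'v set \<Rightarrow> ('v,'a::field) mpoly \<Rightarrow> nat" where
  "maxrank Y Z g = (SUP S. rank_eval Y Z g S)"

end

theory Submission
  imports Defs
begin

text \<open>After the substitution every bottom linear form splits as \<open>l = l\<^sub>Y + l\<^sub>Z\<close> into
  its \<open>Y\<close>- and \<open>Z\<close>-part, so a product gate of degree \<open>d\<close> expands into \<open>2\<^sup>d\<close> products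
  \<open>a \<cdot> b\<close> with \<open>a\<close> a polynomial in \<open>Y\<close> and \<open>b\<close> a polynomial in \<open>Z\<close>. Gates of any other degree
  disappear in the degree-\<open>d\<close> component, which is all of the homogeneous \<open>f\<^sup>A\<close>.
  The coefficient matrix is additive in the polynomial, and for such a product it factors as
  \<open>M\<^sub>a\<^sub>b(p,q) = M\<^sub>a(p,1) \<cdot> M\<^sub>b(1,q)\<close>, a matrix of rank at most one under every evaluation.
  Hence every evaluation of \<open>M\<^bsub>\<Phi>\<^sup>A\<^esub>\<close> has rank at most \<open>k \<cdot> 2\<^sup>d\<close>.\<close>

abbreviation lookup where "lookup \<equiv> Poly_Mapping.lookup"
abbreviation keys where "keys \<equiv> Poly_Mapping.keys"
abbreviation single where "single \<equiv> Poly_Mapping.single"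

lemma lookup_single_if: "lookup (single k v) k' = (if k = k' then v else 0)"
  by (simp add: Poly_Mapping.lookup_single when_def)

lemma sum_single_lookup:
  fixes p :: "'a \<Rightarrow>\<^sub>0 'b::comm_monoid_add"
  assumes "finite K" "keys p \<subseteq> K"
  shows "(\<Sum>a\<in>K. single a (lookup p a)) = p"
proof (rule poly_mapping_eqI)
  fix k
  have "lookup (\<Sum>a\<in>K. single a (lookup p a)) k = (if k \<in> K then lookup p k else 0)"
    using assms(1) by (simp add: Poly_Mapping.lookup_sum lookup_single_if sum.delta')
  then show "lookup (\<Sum>a\<in>K. single a (lookup p a)) k = lookup p k"
    using assms(2) by (auto simp: in_keys_iff)
qed

lemma (in additive) sum_list: "f (sum_list xs) = sum_list (map f xs)"
  by (induction xs) (simp_all add: zero add)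

lemma additive_mult_from_monomials:
  fixes \<phi> \<psi>1 \<psi>2 :: "('a::monoid_add \<Rightarrow>\<^sub>0 'b::comm_ring) \<Rightarrow> 'c::comm_ring"
  assumes "additive \<phi>" "additive \<psi>1" "additive \<psi>2"
    and "\<And>a b. a \<in> keys p \<Longrightarrow> b \<in> keys q \<Longrightarrow>
      \<phi> (single a (lookup p a) * single b (lookup q b))
        = \<psi>1 (single a (lookup p a)) * \<psi>2 (single b (lookup q b))"
  shows "\<phi> (p * q) = \<psi>1 p * \<psi>2 q"
proof -
  have "p * q = (\<Sum>a\<in>keys p. \<Sum>b\<in>keys q. single a (lookup p a) * single b (lookup q b))"
    by (simp add: sum_single_lookup flip: sum_product)
  then have "\<phi> (p * q) =
      (\<Sum>a\<in>keys p. \<Sum>b\<in>keys q. \<psi>1 (single a (lookup p a)) * \<psi>2 (single b (lookup q b)))"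
    using assms by (simp add: additive.sum)
  also have "\<dots> =
      \<psi>1 (\<Sum>a\<in>keys p. single a (lookup p a)) * \<psi>2 (\<Sum>b\<in>keys q. single b (lookup q b))"
    using assms(2,3) by (simp add: additive.sum sum_product)
  finally show ?thesis by (simp add: sum_single_lookup)
qed

lemma rename_mon_add: "rename_mon A (m + n) = rename_mon A m + rename_mon A n"
  unfolding rename_mon_def
  by (rule Poly_Mapping.setsum_keys_plus_distrib) (simp_all add: Poly_Mapping.single_add)

lemma rename_mon_single: "rename_mon A (single x n) = single (A x) n"
  by (simp add: rename_mon_def)

lemma additive_rename_poly: "additive (rename_poly A)"
  by unfold_locales
    (unfold rename_poly_def,
     rule Poly_Mapping.setsum_keys_plus_distrib[where f="\<lambda>m c. single (rename_mon A m) c"],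
     simp_all add: Poly_Mapping.single_add)

lemma rename_poly_single: "rename_poly A (single m c) = single (rename_mon A m) c"
  by (simp add: rename_poly_def)

lemma rename_poly_mult:
  fixes p q :: "('x,'a::comm_ring_1) mpoly"
  shows "rename_poly A (p * q) = rename_poly A p * rename_poly A q"
  by (rule additive_mult_from_monomials[OF additive_rename_poly additive_rename_poly
        additive_rename_poly])
     (simp add: Poly_Mapping.mult_single rename_poly_single rename_mon_add)

lemma rename_poly_one: "rename_poly A (1::('x,'a::comm_ring_1) mpoly) = 1"
  by (metis rename_poly_single rename_mon_single Poly_Mapping.single_one Poly_Mapping.single_zero)

lemma rename_poly_prod_list:
  fixes ls :: "('x,'a::comm_ring_1) mpoly list"
  shows "rename_poly A (prod_list ls) = prod_list (map (rename_poly A) ls)"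
  by (induction ls) (simp_all add: rename_poly_one rename_poly_mult)

lemma circuit_poly_circuit_subst:
  "circuit_poly (circuit_subst A \<Phi>) = rename_poly A (circuit_poly \<Phi>)"
  unfolding circuit_poly_def circuit_subst_def
  by (simp add: additive.sum_list[OF additive_rename_poly] rename_poly_prod_list o_def)

lemma keys_rename_poly: "keys (rename_poly A p) \<subseteq> rename_mon A ` keys p"
proof -
  have "keys (rename_poly A p) \<subseteq> (\<Union>m\<in>keys p. keys (single (rename_mon A m) (lookup p m)))"
    unfolding rename_poly_def by (rule Poly_Mapping.keys_sum)
  then show ?thesis by auto
qed

lemma mon_deg_add: "mon_deg (m + n) = mon_deg m + mon_deg n"
  unfolding mon_deg_def
  by (rule Poly_Mapping.setsum_keys_plus_distrib[where f="\<lambda>_ c. c"]) simp_all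

lemma mon_deg_zero [simp]: "mon_deg 0 = 0"
  by (simp add: mon_deg_def)

lemma mon_deg_single [simp]: "mon_deg (single v n) = n"
  by (simp add: mon_deg_def)

lemma mon_deg_rename_mon: "mon_deg (rename_mon A m) = mon_deg m"
proof -
  have "mon_deg (rename_mon A m) = (\<Sum>x\<in>keys m. mon_deg (single (A x) (lookup m x)))"
    unfolding rename_mon_def
    by (rule sum_comp_morphism[unfolded o_def, symmetric]) (simp_all add: mon_deg_add)
  then show ?thesis by (simp add: mon_deg_def[of m])
qed

lemma homogeneous_mult:
  fixes p q :: "('v,'a::comm_ring_1) mpoly"
  assumes "homogeneous d p" "homogeneous e q"
  shows "homogeneous (d + e) (p * q)"
  unfolding homogeneous_def
proof
  fix m assume "m \<in> keys (p * q)"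
  then obtain a b where "a \<in> keys p" "b \<in> keys q" "m = a + b"
    using Poly_Mapping.keys_mult by blast
  then show "mon_deg m = d + e"
    using assms by (simp add: homogeneous_def mon_deg_add)
qed

lemma homogeneous_one: "homogeneous 0 (1::('v,'a::comm_ring_1) mpoly)"
  by (simp add: homogeneous_def)

lemma homogeneous_prod_list:
  fixes ls :: "('v,'a::comm_ring_1) mpoly list"
  shows "\<forall>l\<in>set ls. homogeneous 1 l \<Longrightarrow> homogeneous (length ls) (prod_list ls)"
  by (induction ls) (auto simp: homogeneous_one dest: homogeneous_mult)

lemma homogeneous_rename_poly: "homogeneous d p \<Longrightarrow> homogeneous d (rename_poly A p)"
  using keys_rename_poly[of A p] by (auto simp: homogeneous_def mon_deg_rename_mon)

definition hom_component :: "nat \<Rightarrow> ('v,'a::zero) mpoly \<Rightarrow> ('v,'a) mpoly" where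
  "hom_component d g = Abs_poly_mapping (\<lambda>m. if mon_deg m = d then lookup g m else 0)"

lemma lookup_hom_component:
  "lookup (hom_component d g) m = (if mon_deg m = d then lookup g m else 0)"
proof -
  have "finite {m. (if mon_deg m = d then lookup g m else 0) \<noteq> 0}"
    by (rule finite_subset[of _ "keys g"]) (auto simp: in_keys_iff)
  then show ?thesis unfolding hom_component_def by simp
qed

lemma additive_hom_component: "additive (hom_component d :: ('v,'a::ab_group_add) mpoly \<Rightarrow> _)"
  by unfold_locales
    (auto intro!: poly_mapping_eqI simp: lookup_hom_component Poly_Mapping.lookup_add)

lemma hom_component_homogeneous:
  assumes "homogeneous e g"
  shows "hom_component d g = (if e = d then g else 0)"
  using assms
  by (intro poly_mapping_eqI) (auto simp: lookup_hom_component homogeneous_def in_keys_iff)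

lemma vars_mult: "vars (p * q) \<subseteq> vars p \<union> vars (q::('v,'a::comm_ring_1) mpoly)"
proof
  fix v assume "v \<in> vars (p * q)"
  then obtain m where m: "m \<in> keys (p * q)" "v \<in> keys m" by (auto simp: vars_def)
  then obtain a b where "a \<in> keys p" "b \<in> keys q" "m = a + b"
    using Poly_Mapping.keys_mult by blast
  then show "v \<in> vars p \<union> vars q"
    using m(2) Poly_Mapping.keys_add[of a b] by (auto simp: vars_def)
qed

lemma vars_one [simp]: "vars (1::('v,'a::comm_ring_1) mpoly) = {}"
  by (simp add: vars_def)

definition split_rank_le ::
    "'v set \<Rightarrow> 'v set \<Rightarrow> ('v,'a::comm_ring_1) mpoly \<Rightarrow> nat \<Rightarrow> bool" where
  "split_rank_le Y Z g n \<longleftrightarrow>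
     (\<exists>ps. length ps \<le> n \<and> (\<forall>(a,b)\<in>set ps. vars a \<subseteq> Y \<and> vars b \<subseteq> Z)
       \<and> g = (\<Sum>(a,b)\<leftarrow>ps. a * b))"

lemma split_rank_le_zero: "split_rank_le Y Z 0 n"
  unfolding split_rank_le_def by (rule exI[of _ "[]"]) simp

lemma split_rank_le_one: "split_rank_le Y Z 1 1"
  unfolding split_rank_le_def by (rule exI[of _ "[(1,1)]"]) simp

lemma split_rank_le_add:
  assumes "split_rank_le Y Z g n" "split_rank_le Y Z h m"
  shows "split_rank_le Y Z (g + h) (n + m)"
proof -
  obtain ps qs where
    "length ps \<le> n" "\<forall>(a,b)\<in>set ps. vars a \<subseteq> Y \<and> vars b \<subseteq> Z" "g = (\<Sum>(a,b)\<leftarrow>ps. a * b)"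
    "length qs \<le> m" "\<forall>(a,b)\<in>set qs. vars a \<subseteq> Y \<and> vars b \<subseteq> Z" "h = (\<Sum>(a,b)\<leftarrow>qs. a * b)"
    using assms unfolding split_rank_le_def by blast
  then show ?thesis unfolding split_rank_le_def by (intro exI[of _ "ps @ qs"]) auto
qed

lemma sum_list_split_products_mult:
  fixes ps qs :: "('b::comm_ring \<times> 'b) list"
  shows "(\<Sum>(a,b)\<leftarrow>concat (map (\<lambda>(a,b). map (\<lambda>(c,d). (a * c, b * d)) qs) ps). a * b)
       = (\<Sum>(a,b)\<leftarrow>ps. a * b) * (\<Sum>(c,d)\<leftarrow>qs. c * d)"
proof (induction ps)
  case (Cons p ps)
  have "(\<Sum>(c,d)\<leftarrow>qs. (fst p * c) * (snd p * d)) = fst p * snd p * (\<Sum>(c,d)\<leftarrow>qs. c * d)"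
    by (induction qs) (auto simp: algebra_simps)
  with Cons show ?case by (simp add: case_prod_unfold o_def algebra_simps)
qed simp

lemma split_rank_le_mult:
  assumes "split_rank_le Y Z g n" "split_rank_le Y Z h m"
  shows "split_rank_le Y Z (g * h) (n * m)"
proof -
  obtain ps qs where
    ps: "length ps \<le> n" "\<forall>(a,b)\<in>set ps. vars a \<subseteq> Y \<and> vars b \<subseteq> Z" "g = (\<Sum>(a,b)\<leftarrow>ps. a * b)"
    and
    qs: "length qs \<le> m" "\<forall>(a,b)\<in>set qs. vars a \<subseteq> Y \<and> vars b \<subseteq> Z" "h = (\<Sum>(a,b)\<leftarrow>qs. a * b)"
    using assms unfolding split_rank_le_def by blast
  let ?rs = "concat (map (\<lambda>(a,b). map (\<lambda>(c,d). (a * c, b * d)) qs) ps)"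
  have "length ?rs = length ps * length qs"
    by (induction ps) auto
  also have "\<dots> \<le> n * m" using ps(1) qs(1) by (rule mult_le_mono)
  finally have "length ?rs \<le> n * m" .
  moreover have "\<forall>(a,b)\<in>set ?rs. vars a \<subseteq> Y \<and> vars b \<subseteq> Z"
  proof clarsimp
    fix a b c d assume "(a, b) \<in> set ps" "(c, d) \<in> set qs"
    then have "vars a \<subseteq> Y" "vars b \<subseteq> Z" "vars c \<subseteq> Y" "vars d \<subseteq> Z"
      using ps(2) qs(2) by auto
    then show "vars (a * c) \<subseteq> Y \<and> vars (b * d) \<subseteq> Z"
      using vars_mult[of a c] vars_mult[of b d] by blast
  qed
  moreover have "g * h = (\<Sum>(a,b)\<leftarrow>?rs. a * b)"
    using ps(3) qs(3) by (simp only: sum_list_split_products_mult)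
  ultimately show ?thesis unfolding split_rank_le_def by blast
qed

lemma split_rank_le_sum_list:
  "\<forall>g\<in>set gs. split_rank_le Y Z g n \<Longrightarrow> split_rank_le Y Z (sum_list gs) (length gs * n)"
  by (induction gs) (simp_all add: split_rank_le_zero split_rank_le_add)

lemma split_rank_le_prod_list:
  "\<forall>l\<in>set ls. split_rank_le Y Z l n \<Longrightarrow> split_rank_le Y Z (prod_list ls) (n ^ length ls)"
  by (induction ls) (simp_all add: split_rank_le_one[simplified] split_rank_le_mult)

lemma mon_deg_one_keys:
  assumes "mon_deg m = 1"
  obtains x where "keys m = {x}"
proof -
  have "card (keys m) \<le> mon_deg m"
    unfolding mon_deg_def using sum_bounded_below[of "keys m" 1 "lookup m"]
    by (simp add: in_keys_iff Suc_le_eq)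
  moreover have "keys m \<noteq> {}" using assms by (auto simp: mon_deg_def)
  ultimately have "card (keys m) = 1"
    using assms by (simp add: le_antisym Suc_leI card_gt_0_iff del: Poly_Mapping.keys_eq_empty)
  then show ?thesis using that card_1_singletonE by blast
qed

lemma keys_rename_mon: "keys (rename_mon A m) \<subseteq> A ` keys m"
proof -
  have "keys (rename_mon A m) \<subseteq> (\<Union>x\<in>keys m. keys (single (A x) (lookup m x)))"
    unfolding rename_mon_def by (rule Poly_Mapping.keys_sum)
  then show ?thesis by auto
qed

lemma vars_sum_single: "vars (\<Sum>m\<in>M. single m (c m)) \<subseteq> \<Union> (keys ` M)"
proof -
  have "keys (\<Sum>m\<in>M. single m (c m)) \<subseteq> (\<Union>m\<in>M. keys (single m (c m)))"
    by (rule Poly_Mapping.keys_sum)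
  then show ?thesis by (auto simp: vars_def split: if_splits)
qed

lemma split_rank_le_separated_monomials:
  fixes p :: "('v,'a::comm_ring_1) mpoly"
  assumes "\<forall>m\<in>keys p. keys m \<subseteq> Y \<or> keys m \<subseteq> Z"
  shows "split_rank_le Y Z p 2"
proof -
  let ?MY = "keys p \<inter> {m. keys m \<subseteq> Y}"
  define pY where "pY = (\<Sum>m\<in>?MY. single m (lookup p m))"
  define pZ where "pZ = (\<Sum>m\<in>keys p - {m. keys m \<subseteq> Y}. single m (lookup p m))"
  have "p = (\<Sum>m\<in>keys p. single m (lookup p m))"
    by (simp add: sum_single_lookup)
  also have "\<dots> = pY + pZ"
    unfolding pY_def pZ_def by (rule sum.Int_Diff) simp
  finally have "p = pY + pZ" .
  moreover have "vars pY \<subseteq> Y"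
    unfolding pY_def using vars_sum_single by fastforce
  moreover have "vars pZ \<subseteq> Z"
    unfolding pZ_def using vars_sum_single assms by fastforce
  ultimately show ?thesis
    unfolding split_rank_le_def by (intro exI[of _ "[(pY, 1), (1, pZ)]"]) auto
qed

lemma split_rank_le_rename_linear_form:
  assumes "hom_linear_form X l" "A ` X \<subseteq> Y \<union> Z"
  shows "split_rank_le Y Z (rename_poly A l) 2"
proof (rule split_rank_le_separated_monomials, rule ballI)
  fix m assume "m \<in> keys (rename_poly A l)"
  then obtain m' where m': "m' \<in> keys l" "m = rename_mon A m'"
    using keys_rename_poly by blast
  then have "mon_deg m' = 1" "keys m' \<subseteq> X"
    using assms(1) by (auto simp: hom_linear_form_def homogeneous_def vars_def)
  then obtain x where "keys m' = {x}" "x \<in> X" by (metis mon_deg_one_keys insert_subset)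
  moreover have "keys m \<subseteq> {A x}"
    using keys_rename_mon[of A m'] m'(2) \<open>keys m' = {x}\<close> by simp
  ultimately show "keys m \<subseteq> Y \<or> keys m \<subseteq> Z"
    using assms(2) by blast
qed

definition cofactor :: "('v,'a::zero) mpoly \<Rightarrow> ('v \<Rightarrow>\<^sub>0 nat) \<Rightarrow> 'v set \<Rightarrow> ('v,'a) mpoly" where
  "cofactor g c U = Abs_poly_mapping (\<lambda>n. if keys n \<subseteq> U then lookup g (c + n) else 0)"

lemma lookup_cofactor:
  "lookup (cofactor g c U) n = (if keys n \<subseteq> U then lookup g (c + n) else 0)"
proof -
  have "{n. (if keys n \<subseteq> U then lookup g (c + n) else 0) \<noteq> 0} \<subseteq> (\<lambda>m. m - c) ` keys g"
  proof
    fix n assume "n \<in> {n. (if keys n \<subseteq> U then lookup g (c + n) else 0) \<noteq> 0}"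
    then have "c + n \<in> keys g" by (simp add: in_keys_iff split: if_splits)
    then show "n \<in> (\<lambda>m. m - c) ` keys g" by (rule rev_image_eqI) simp
  qed
  then have "finite {n. (if keys n \<subseteq> U then lookup g (c + n) else 0) \<noteq> 0}"
    by (rule finite_subset) simp
  then show ?thesis unfolding cofactor_def by simp
qed

lemma vars_cofactor: "vars (cofactor g c U) \<subseteq> U"
proof -
  have "keys n \<subseteq> U" if "n \<in> keys (cofactor g c U)" for n
    using that by (simp add: in_keys_iff lookup_cofactor split: if_splits)
  then show ?thesis by (auto simp: vars_def)
qed

lemma additive_cofactor: "additive (\<lambda>g::('v,'a::ab_group_add) mpoly. cofactor g c U)"
  by unfold_locales
    (auto intro!: poly_mapping_eqI simp: lookup_cofactor Poly_Mapping.lookup_add)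

lemma keys_add_monomials: "keys (m + n :: 'v \<Rightarrow>\<^sub>0 nat) = keys m \<union> keys n"
  by (auto simp: in_keys_iff Poly_Mapping.lookup_add)

lemma add_diff_mon_divides: "mon_divides c m \<Longrightarrow> c + (m - c) = (m :: 'v \<Rightarrow>\<^sub>0 nat)"
  by (rule poly_mapping_eqI)
     (simp add: mon_divides_def Poly_Mapping.lookup_add Poly_Mapping.lookup_minus)

lemma add_eq_iff_mon_divides: "c + n = m \<longleftrightarrow> mon_divides c m \<and> n = m - (c :: 'v \<Rightarrow>\<^sub>0 nat)"
proof
  assume "mon_divides c m \<and> n = m - c"
  then show "c + n = m" using add_diff_mon_divides by blast
qed (auto simp: mon_divides_def Poly_Mapping.lookup_add)

lemma lookup_single_one_mult:
  fixes G :: "('v,'a::comm_ring_1) mpoly"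
  shows "lookup (single c 1 * G) m = (if mon_divides c m then lookup G (m - c) else 0)"
proof -
  have "single c 1 * G = (\<Sum>n\<in>keys G. single (c + n) (lookup G n))"
    by (subst (1) sum_single_lookup[of "keys G" G, symmetric])
       (simp_all add: sum_distrib_left Poly_Mapping.mult_single)
  also have "lookup \<dots> m = (\<Sum>n\<in>keys G. if c + n = m then lookup G n else 0)"
    by (simp add: Poly_Mapping.lookup_sum lookup_single_if)
  also have "\<dots> = (\<Sum>n\<in>keys G. if mon_divides c m \<and> n = m - c then lookup G n else 0)"
    by (simp only: add_eq_iff_mon_divides)
  finally have "lookup (single c 1 * G) m = \<dots>" .
  then show ?thesis by (cases "mon_divides c m") (auto simp: in_keys_iff)
qed

lemma keys_diff_monomial: "keys (m - c :: 'v \<Rightarrow>\<^sub>0 nat) \<subseteq> keys m"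
  by (auto simp: in_keys_iff Poly_Mapping.lookup_minus)

lemma cofactor_decomposition:
  fixes g :: "('v,'a::comm_ring_1) mpoly"
  shows "\<forall>m\<in>keys (g - single c 1 * cofactor g c U). \<not> (mon_divides c m \<and> keys m \<subseteq> U)"
proof (intro ballI notI)
  fix m
  assume m: "m \<in> keys (g - single c 1 * cofactor g c U)" and "mon_divides c m \<and> keys m \<subseteq> U"
  moreover note keys_diff_monomial[of m c]
  ultimately have "mon_divides c m" "keys (m - c) \<subseteq> U" by auto
  then have "lookup (single c 1 * cofactor g c U) m = lookup g m"
    by (simp add: lookup_single_one_mult lookup_cofactor add_diff_mon_divides)
  with m show False by (simp add: in_keys_iff Poly_Mapping.lookup_minus)
qed

lemma cofactor_unique:
  fixes g G R :: "('v,'a::comm_ring_1) mpoly"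
  assumes "keys c \<subseteq> U" "vars G \<subseteq> U" "g = single c 1 * G + R"
    and "\<forall>m\<in>keys R. \<not> (mon_divides c m \<and> keys m \<subseteq> U)"
  shows "G = cofactor g c U"
proof (rule poly_mapping_eqI)
  fix n
  show "lookup G n = lookup (cofactor g c U) n"
  proof (cases "keys n \<subseteq> U")
    case True
    have "mon_divides c (c + n)" by (simp add: mon_divides_def Poly_Mapping.lookup_add)
    moreover have "keys (c + n) \<subseteq> U" using True assms(1) by (simp add: keys_add_monomials)
    ultimately have "lookup R (c + n) = 0" using assms(4) by (auto simp: in_keys_iff)
    then have "lookup g (c + n) = lookup G n"
      using assms(3) \<open>mon_divides c (c + n)\<close>
      by (simp add: Poly_Mapping.lookup_add lookup_single_one_mult)
    then show ?thesis using True by (simp add: lookup_cofactor)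
  next
    case False
    then have "n \<notin> keys G" using assms(2) by (auto simp: vars_def)
    then show ?thesis using False by (simp add: lookup_cofactor in_keys_iff)
  qed
qed

lemma keys_ml_mon: "finite P \<Longrightarrow> keys (ml_mon P) = P"
  by (auto simp: ml_mon_def Poly_Mapping.lookup_sum lookup_single_if in_keys_iff split: if_splits)

lemma coeff_entry_eq_cofactor:
  assumes "finite P" "finite Q"
  shows "coeff_entry g P Q = cofactor g (ml_mon P + ml_mon Q) (P \<union> Q)"
proof -
  let ?c = "ml_mon P + ml_mon Q"
  have "keys ?c \<subseteq> P \<union> Q" using assms by (simp add: keys_add_monomials keys_ml_mon)
  then show ?thesis
    unfolding coeff_entry_def
    by (intro the_equality conjI exI[of _ "g - single ?c 1 * cofactor g ?c (P \<union> Q)"]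
        cofactor_decomposition vars_cofactor)
       (auto intro: cofactor_unique)
qed

lemma cofactor_single:
  "cofactor (single m e) c U =
     (if mon_divides c m \<and> keys (m - c) \<subseteq> U then single (m - c) e else 0)"
proof (rule poly_mapping_eqI)
  fix n
  have "c + n = m \<longleftrightarrow> mon_divides c m \<and> n = m - c" by (rule add_eq_iff_mon_divides)
  then show "lookup (cofactor (single m e) c U) n =
    lookup (if mon_divides c m \<and> keys (m - c) \<subseteq> U then single (m - c) e else 0) n"
    by (auto simp: lookup_cofactor lookup_single_if)
qed

lemma mon_divides_add_separated:
  assumes "keys \<alpha> \<subseteq> Y" "keys p \<subseteq> Y" "keys \<beta> \<subseteq> Z" "keys q \<subseteq> Z" "Y \<inter> Z = {}"
  shows "mon_divides (p + q) (\<alpha> + \<beta>) \<longleftrightarrow> mon_divides p \<alpha> \<and> mon_divides q \<beta>"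
proof -
  have "lookup p v + lookup q v \<le> lookup \<alpha> v + lookup \<beta> v \<longleftrightarrow>
        lookup p v \<le> lookup \<alpha> v \<and> lookup q v \<le> lookup \<beta> v" for v
  proof -
    have "v \<notin> Y \<or> v \<notin> Z" using assms(5) by blast
    then have "lookup \<alpha> v = 0 \<and> lookup p v = 0 \<or> lookup \<beta> v = 0 \<and> lookup q v = 0"
      using assms(1-4) by (metis in_keys_iff subsetD)
    then show ?thesis by auto
  qed
  then show ?thesis by (auto simp: mon_divides_def Poly_Mapping.lookup_add)
qed

lemma cofactor_mult_separated:
  fixes a b :: "('v,'a::comm_ring_1) mpoly"
  assumes "vars a \<subseteq> Y" "vars b \<subseteq> Z" "keys p \<subseteq> Y" "keys q \<subseteq> Z" "P \<subseteq> Y" "Q \<subseteq> Z"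
    and "Y \<inter> Z = {}"
  shows "cofactor (a * b) (p + q) (P \<union> Q) = cofactor a p P * cofactor b q Q"
proof (rule additive_mult_from_monomials[OF additive_cofactor additive_cofactor additive_cofactor])
  fix \<alpha> \<beta> assume "\<alpha> \<in> keys a" "\<beta> \<in> keys b"
  then have \<alpha>: "keys \<alpha> \<subseteq> Y" and \<beta>: "keys \<beta> \<subseteq> Z" using assms(1,2) by (auto simp: vars_def)
  have "keys (\<alpha> - p) \<subseteq> Y" "keys (\<beta> - q) \<subseteq> Z"
    using \<alpha> \<beta> keys_diff_monomial[of \<alpha> p] keys_diff_monomial[of \<beta> q] by blast+
  then have keys_iff:
      "keys ((\<alpha> - p) + (\<beta> - q)) \<subseteq> P \<union> Q \<longleftrightarrow> keys (\<alpha> - p) \<subseteq> P \<and> keys (\<beta> - q) \<subseteq> Q"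
    unfolding keys_add_monomials using assms(5-7) by blast
  have diff: "(\<alpha> + \<beta>) - (p + q) = (\<alpha> - p) + (\<beta> - q)" if "mon_divides p \<alpha>" "mon_divides q \<beta>"
  proof (rule poly_mapping_eqI)
    fix v
    have "lookup p v \<le> lookup \<alpha> v" "lookup q v \<le> lookup \<beta> v"
      using that by (auto simp: mon_divides_def)
    then show "lookup ((\<alpha> + \<beta>) - (p + q)) v = lookup ((\<alpha> - p) + (\<beta> - q)) v"
      by (simp add: Poly_Mapping.lookup_add Poly_Mapping.lookup_minus)
  qed
  show "cofactor (single \<alpha> (lookup a \<alpha>) * single \<beta> (lookup b \<beta>)) (p + q) (P \<union> Q) =
        cofactor (single \<alpha> (lookup a \<alpha>)) p P * cofactor (single \<beta> (lookup b \<beta>)) q Q"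
    using mon_divides_add_separated[OF \<alpha> assms(3) \<beta> assms(4,7)] keys_iff diff
    by (cases "mon_divides p \<alpha> \<and> mon_divides q \<beta>")
       (auto simp: Poly_Mapping.mult_single cofactor_single)
qed

lemma coeff_entry_mult_separated:
  fixes a b :: "('v,'a::comm_ring_1) mpoly"
  assumes "vars a \<subseteq> Y" "vars b \<subseteq> Z" "P \<subseteq> Y" "Q \<subseteq> Z" "Y \<inter> Z = {}" "finite P" "finite Q"
  shows "coeff_entry (a * b) P Q = coeff_entry a P {} * coeff_entry b {} Q"
proof -
  have "coeff_entry (a * b) P Q = cofactor (a * b) (ml_mon P + ml_mon Q) (P \<union> Q)"
    using assms(6,7) by (rule coeff_entry_eq_cofactor)
  also have "\<dots> = cofactor a (ml_mon P) P * cofactor b (ml_mon Q) Q"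
    using assms by (intro cofactor_mult_separated) (simp_all add: keys_ml_mon)
  also have "\<dots> = coeff_entry a P {} * coeff_entry b {} Q"
    using assms(6,7) by (simp add: coeff_entry_eq_cofactor ml_mon_def)
  finally show ?thesis .
qed

definition mon_value :: "('v \<Rightarrow> 'a::comm_ring_1) \<Rightarrow> ('v \<Rightarrow>\<^sub>0 nat) \<Rightarrow> 'a" where
  "mon_value S m = (\<Prod>v\<in>keys m. S v ^ lookup m v)"

lemma mon_value_add: "mon_value S (m + n) = mon_value S m * mon_value S n"
proof -
  let ?K = "keys m \<union> keys n"
  have "mon_value S k = (\<Prod>v\<in>?K. S v ^ lookup k v)" if "keys k \<subseteq> ?K" for k
    unfolding mon_value_def using that by (intro prod.mono_neutral_left) (auto simp: in_keys_iff)
  moreover have "keys (m + n) \<subseteq> ?K" by (rule Poly_Mapping.keys_add)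
  ultimately show ?thesis
    by (simp add: Poly_Mapping.lookup_add power_add prod.distrib)
qed

lemma eval_poly_eq_sum_mon_value:
  "eval_poly S g = (\<Sum>m\<in>keys g. lookup g m * mon_value S m)"
  by (simp add: eval_poly_def mon_value_def)

lemma additive_eval_poly: "additive (eval_poly S)"
  by unfold_locales
    (unfold eval_poly_eq_sum_mon_value,
     rule Poly_Mapping.setsum_keys_plus_distrib[where f="\<lambda>m c. c * mon_value S m"],
     simp_all add: distrib_right)

lemma eval_poly_single: "eval_poly S (single m e) = e * mon_value S m"
  by (simp add: eval_poly_eq_sum_mon_value)

lemma eval_poly_mult: "eval_poly S (p * q) = eval_poly S p * eval_poly S q"
  by (rule additive_mult_from_monomials[OF additive_eval_poly additive_eval_poly
        additive_eval_poly])
     (simp add: Poly_Mapping.mult_single eval_poly_single mon_value_add)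

lemma (in module) span_sum_list:
  "(\<And>x. x \<in> set xs \<Longrightarrow> f x \<in> span W) \<Longrightarrow> sum_list (map f xs) \<in> span W"
  by (induction xs) (auto intro: span_add span_zero)

lemma additive_eval_row:
  assumes "finite P"
  shows "additive (\<lambda>g. eval_row Z g S P)"
proof
  fix g h
  have "eval_poly S (coeff_entry (g + h) P Q)
      = eval_poly S (coeff_entry g P Q) + eval_poly S (coeff_entry h P Q)" if "finite Q" for Q
    using assms that
    by (simp add: coeff_entry_eq_cofactor additive.add[OF additive_cofactor]
        additive.add[OF additive_eval_poly])
  then show "eval_row Z (g + h) S P = eval_row Z g S P + eval_row Z h S P"
    by (auto simp: eval_row_def)
qed

lemma eval_row_mult_separated:
  fixes a b :: "('v,'a::comm_ring_1) mpoly"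
  assumes "vars a \<subseteq> Y" "vars b \<subseteq> Z" "P \<subseteq> Y" "Y \<inter> Z = {}" "finite P"
  shows "eval_row Z (a * b) S P = (\<lambda>Q. eval_poly S (coeff_entry a P {}) * eval_row Z b S {} Q)"
  using assms
  by (auto simp: eval_row_def coeff_entry_mult_separated eval_poly_mult)

lemma rank_eval_le_split_rank:
  fixes g :: "('v,'a::field) mpoly"
  assumes "split_rank_le Y Z g n" "Y \<inter> Z = {}"
  shows "rank_eval Y Z g S \<le> n"
proof -
  interpret vs: vector_space "\<lambda>c (f::'v set \<Rightarrow> 'a) Q. c * f Q"
    by unfold_locales (auto simp: fun_eq_iff algebra_simps)
  obtain ps where ps: "length ps \<le> n" "\<forall>(a,b)\<in>set ps. vars a \<subseteq> Y \<and> vars b \<subseteq> Z"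
    "g = (\<Sum>(a,b)\<leftarrow>ps. a * b)"
    using assms(1) unfolding split_rank_le_def by blast
  define W where "W = (\<lambda>(a,b). eval_row Z b S {}) ` set ps"
  have "eval_row Z g S P \<in> vs.span W" if "finite P" "P \<subseteq> Y" for P
  proof -
    have "eval_row Z g S P = (\<Sum>(a,b)\<leftarrow>ps. eval_row Z (a * b) S P)"
      unfolding ps(3) additive.sum_list[OF additive_eval_row[OF \<open>finite P\<close>]]
      by (simp add: case_prod_unfold o_def)
    moreover have "eval_row Z (a * b) S P \<in> vs.span W" if "(a, b) \<in> set ps" for a b
    proof -
      have "eval_row Z b S {} \<in> vs.span W"
        using that unfolding W_def by (intro vs.span_base) force
      moreover have "vars a \<subseteq> Y" "vars b \<subseteq> Z" using that ps(2) by auto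
      ultimately show ?thesis
        using vs.span_scale assms(2) \<open>finite P\<close> \<open>P \<subseteq> Y\<close>
        by (simp add: eval_row_mult_separated)
    qed
    ultimately show ?thesis
      by (auto intro: vs.span_sum_list)
  qed
  then have "vs.dim (eval_row Z g S ` {P. finite P \<and> P \<subseteq> Y}) \<le> card W"
    by (intro vs.dim_le_card) (auto simp: W_def)
  also have "\<dots> \<le> length ps"
    unfolding W_def using card_image_le card_length order_trans by blast
  finally show ?thesis using ps(1) unfolding rank_eval_def by simp
qed

lemma maxrank_le_split_rank:
  fixes g :: "('v,'a::field) mpoly"
  assumes "split_rank_le Y Z g n" "Y \<inter> Z = {}"
  shows "maxrank Y Z g \<le> n"
  unfolding maxrank_def using rank_eval_le_split_rank[OF assms] by (intro cSUP_least) auto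

lemma split_rank_le_gate_component:
  fixes ls :: "('x,'a::comm_ring_1) mpoly list"
  assumes "\<forall>l\<in>set ls. hom_linear_form X l" "A ` X \<subseteq> Y \<union> Z"
  shows "split_rank_le Y Z (hom_component d (prod_list (map (rename_poly A) ls))) (2 ^ d)"
proof -
  have "\<forall>l\<in>set (map (rename_poly A) ls). homogeneous 1 l"
    using assms(1) by (auto simp: hom_linear_form_def homogeneous_rename_poly)
  then have "homogeneous (length ls) (prod_list (map (rename_poly A) ls))"
    using homogeneous_prod_list by fastforce
  moreover have "\<forall>l\<in>set (map (rename_poly A) ls). split_rank_le Y Z l 2"
    using assms(1) split_rank_le_rename_linear_form[OF _ assms(2)] by auto
  then have "split_rank_le Y Z (prod_list (map (rename_poly A) ls)) (2 ^ length ls)"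
    using split_rank_le_prod_list by fastforce
  ultimately show ?thesis
    by (cases "length ls = d") (simp_all add: hom_component_homogeneous split_rank_le_zero)
qed

lemma split_rank_le_circuit:
  fixes \<Phi> :: "('x,'a::comm_ring_1) mpoly list list"
  assumes "homogeneous_SPS X \<Phi>" "A ` X \<subseteq> Y \<union> Z"
    and "homogeneous d (circuit_poly (circuit_subst A \<Phi>))"
  shows "split_rank_le Y Z (circuit_poly (circuit_subst A \<Phi>)) (length \<Phi> * 2 ^ d)"
proof -
  let ?g = "circuit_poly (circuit_subst A \<Phi>)"
  \<comment> \<open>Gates of degree \<open>\<noteq> d\<close> cancel in \<open>?g\<close> but need not have split rank \<open>2\<^sup>d\<close>;
    projecting onto degree \<open>d\<close> removes them.\<close>
  have "?g = hom_component d ?g"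
    using assms(3) by (simp add: hom_component_homogeneous)
  also have "\<dots> = (\<Sum>ls\<leftarrow>\<Phi>. hom_component d (prod_list (map (rename_poly A) ls)))"
    by (simp add: circuit_poly_def circuit_subst_def o_def
        additive.sum_list[OF additive_hom_component])
  moreover have "\<forall>h\<in>set (map (\<lambda>ls. hom_component d (prod_list (map (rename_poly A) ls))) \<Phi>).
      split_rank_le Y Z h (2 ^ d)"
    using assms(1) unfolding homogeneous_SPS_def
    by (auto intro!: split_rank_le_gate_component[OF _ assms(2)])
  ultimately show ?thesis
    using split_rank_le_sum_list by fastforce
qed

theorem lemma1:
  fixes X :: "'x set" and Y Z :: "'v set"
    and \<Phi> :: "('x,'a::field) mpoly list list" and f :: "('x,'a) mpoly"
    and k d :: nat and A :: "'x \<Rightarrow> 'v"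
  assumes "homogeneous_SPS X \<Phi>"
    and "length \<Phi> = k"
    and "circuit_poly \<Phi> = f"
    and "homogeneous d f"
    and "Y \<inter> Z = {}"
    and "\<forall>x\<in>X. A x \<in> Y \<union> Z"
  shows "maxrank Y Z (circuit_poly (circuit_subst A \<Phi>)) \<le> k * 2 ^ d"
proof -
  have "homogeneous d (circuit_poly (circuit_subst A \<Phi>))"
    using assms(3,4) by (simp add: circuit_poly_circuit_subst homogeneous_rename_poly)
  moreover have "A ` X \<subseteq> Y \<union> Z" using assms(6) by blast
  ultimately have "split_rank_le Y Z (circuit_poly (circuit_subst A \<Phi>)) (length \<Phi> * 2 ^ d)"
    by (intro split_rank_le_circuit[OF assms(1)])
  then show ?thesis
    unfolding assms(2) using assms(5) by (rule maxrank_le_split_rank)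
qed

end
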